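(* Let $Gr_n$ be the grid graph with vertex set $\{0,\dots,2^n\}^2$, edges between vertices at $\ell_1$-distance 1, and the $\ell_1$-metric. For any $A\subseteq V(Gr_n)$ with $A\ne\emptyset$ and $A^c\ne\emptyset$, we have $\min\{\mathrm{diam}(A),\mathrm{diam}(A^c)\}\le2\,\mathrm{diam}(\partial_VA)$.
   Context: $A^c=V(Gr_n)\setminus A$. The symmetric vertex boundary $\partial_VA$ is the set of all endpoints of edges having one endpoint in $A$ and the other in $A^c$. diam is with respect to the $\ell_1$-metric. *)

theory Defs
  imports Main
begin

definition grid_V :: "nat \<Rightarrow> (int \<times> int) set" where
  "grid_V n = {0..2^n} \<times> {0..2^n}"

definition l1_dist :: "int \<times> int \<Rightarrow> int \<times> int \<Rightarrow> int" where
  "l1_dist p q = \<bar>fst p - fst q\<bar> + \<bar>snd p - snd q\<bar>"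

definition grid_edge :: "nat \<Rightarrow> int \<times> int \<Rightarrow> int \<times> int \<Rightarrow> bool" where
  "grid_edge n p q \<longleftrightarrow> p \<in> grid_V n \<and> q \<in> grid_V n \<and> l1_dist p q = 1"

definition vboundary :: "nat \<Rightarrow> (int \<times> int) set \<Rightarrow> (int \<times> int) set" where
  "vboundary n A = {p. \<exists>q. grid_edge n p q \<and>
      ((p \<in> A \<and> q \<in> grid_V n - A) \<or> (p \<in> grid_V n - A \<and> q \<in> A))}"

text \<open>Diameter w.r.t. the l1 metric (for finite sets; 0 for the empty set).\<close>
definition l1_diam :: "(int \<times> int) set \<Rightarrow> int" where
  "l1_diam S = (if S = {} then 0 else Max {l1_dist p q | p q. p \<in> S \<and> q \<in> S})"

end

theory Submission
  imports Defs
begin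

text \<open>Let \<open>D\<close> be the diameter of the boundary and \<open>N = 2^n\<close>. If \<open>D \<ge> N\<close>, the bound
  \<open>diam A \<le> 2N\<close> suffices. Otherwise the boundary avoids one of the columns \<open>x = 0\<close>, \<open>x = N\<close>
  and one of the rows \<open>y = 0\<close>, \<open>y = N\<close>; let \<open>p\<^sub>0\<close> be the corner where they meet. Walking from a
  vertex \<open>a\<close> of the class not containing \<open>p\<^sub>0\<close> along its row to the column of \<open>p\<^sub>0\<close> and then along
  that column to \<open>p\<^sub>0\<close>, the class must change, and it cannot change on the boundary-free column;
  so the row of \<open>a\<close> meets the boundary, and likewise its column. Hence any two vertices of
  that class differ by at most \<open>D\<close> in each coordinate.\<close>

lemma int_change_point:
  fixes f :: "int \<Rightarrow> 'a"
  assumes "a \<le> b" and "f a \<noteq> f b"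
  shows "\<exists>x. a \<le> x \<and> x < b \<and> f x \<noteq> f (x + 1)"
  using assms
proof (induction b rule: int_ge_induct)
  case base
  then show ?case by simp
next
  case (step b)
  show ?case
  proof (cases "f a = f b")
    case True
    with step show ?thesis by (intro exI[of _ b]) auto
  next
    case False
    with step show ?thesis by force
  qed
qed

lemma l1_diam_image:
  "l1_diam S = (if S = {} then 0 else Max ((\<lambda>(p, q). l1_dist p q) ` (S \<times> S)))"
proof -
  have "{l1_dist p q | p q. p \<in> S \<and> q \<in> S} = (\<lambda>(p, q). l1_dist p q) ` (S \<times> S)"
    by auto
  then show ?thesis
    unfolding l1_diam_def by simp
qed

lemma l1_dist_le_l1_diam:
  assumes "finite S" and "p \<in> S" and "q \<in> S"
  shows "l1_dist p q \<le> l1_diam S"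
proof -
  have "l1_dist p q \<in> (\<lambda>(p, q). l1_dist p q) ` (S \<times> S)"
    using assms(2,3) by force
  with assms show ?thesis
    unfolding l1_diam_image by auto
qed

lemma l1_diam_nonneg:
  assumes "finite S"
  shows "0 \<le> l1_diam S"
proof (cases "S = {}")
  case False
  then obtain p where "p \<in> S" by blast
  from l1_dist_le_l1_diam[OF assms this this] show ?thesis
    by (simp add: l1_dist_def)
qed (simp add: l1_diam_def)

lemma l1_diam_le:
  assumes "finite S" and "0 \<le> K" and "\<And>p q. p \<in> S \<Longrightarrow> q \<in> S \<Longrightarrow> l1_dist p q \<le> K"
  shows "l1_diam S \<le> K"
proof (cases "S = {}")
  case False
  with assms(1,3) show ?thesis
    unfolding l1_diam_image by (auto simp: Max_le_iff)
qed (use assms(2) in \<open>simp add: l1_diam_def\<close>)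

lemma l1_diam_lt_misses_column:
  assumes "finite B" and "l1_diam B < c2 - c1"
  shows "(\<forall>y. (c1, y) \<notin> B) \<or> (\<forall>y. (c2, y) \<notin> B)"
proof (rule ccontr)
  assume "\<not> ?thesis"
  then obtain y1 y2 where "(c1, y1) \<in> B" "(c2, y2) \<in> B" by blast
  with l1_dist_le_l1_diam[OF assms(1)] have "l1_dist (c1, y1) (c2, y2) \<le> l1_diam B" by blast
  with assms(2) show False unfolding l1_dist_def by auto
qed

lemma l1_diam_lt_misses_row:
  assumes "finite B" and "l1_diam B < c2 - c1"
  shows "(\<forall>x. (x, c1) \<notin> B) \<or> (\<forall>x. (x, c2) \<notin> B)"
proof (rule ccontr)
  assume "\<not> ?thesis"
  then obtain x1 x2 where "(x1, c1) \<in> B" "(x2, c2) \<in> B" by blast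
  with l1_dist_le_l1_diam[OF assms(1)] have "l1_dist (x1, c1) (x2, c2) \<le> l1_diam B" by blast
  with assms(2) show False unfolding l1_dist_def by auto
qed

lemma l1_diam_le_twice_if_rows_columns_meet:
  assumes "finite S" and "finite B"
    and meets: "\<And>x y. (x, y) \<in> S \<Longrightarrow> (\<exists>x'. (x', y) \<in> B) \<and> (\<exists>y'. (x, y') \<in> B)"
  shows "l1_diam S \<le> 2 * l1_diam B"
proof (rule l1_diam_le[OF assms(1)])
  show "0 \<le> 2 * l1_diam B"
    using l1_diam_nonneg[OF assms(2)] by simp
  fix p q assume "p \<in> S" "q \<in> S"
  then obtain xp yp xq yq where pq: "p = (xp, yp)" "q = (xq, yq)" "(xp, yp) \<in> S" "(xq, yq) \<in> S"
    by (cases p, cases q) auto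
  then obtain u v u' v' where "(u, yp) \<in> B" "(v, yq) \<in> B" "(xp, u') \<in> B" "(xq, v') \<in> B"
    using meets by meson
  with l1_dist_le_l1_diam[OF assms(2)]
  have "l1_dist (u, yp) (v, yq) \<le> l1_diam B" "l1_dist (xp, u') (xq, v') \<le> l1_diam B"
    by blast+
  moreover have "\<bar>yp - yq\<bar> \<le> l1_dist (u, yp) (v, yq)" "\<bar>xp - xq\<bar> \<le> l1_dist (xp, u') (xq, v')"
    by (simp_all add: l1_dist_def)
  ultimately have "\<bar>xp - xq\<bar> \<le> l1_diam B" "\<bar>yp - yq\<bar> \<le> l1_diam B"
    by linarith+
  then show "l1_dist p q \<le> 2 * l1_diam B"
    unfolding pq(1,2) l1_dist_def by simp
qed

lemma finite_grid_V: "finite (grid_V n)"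
  unfolding grid_V_def by simp

lemma vboundary_subset_grid_V: "vboundary n A \<subseteq> grid_V n"
  unfolding vboundary_def grid_edge_def by auto

lemma finite_vboundary: "finite (vboundary n A)"
  using vboundary_subset_grid_V finite_grid_V by (rule finite_subset)

lemma l1_diam_grid_V_subset_le:
  assumes "S \<subseteq> grid_V n"
  shows "l1_diam S \<le> 2 * 2 ^ n"
proof (rule l1_diam_le)
  show "finite S"
    using assms finite_grid_V by (rule finite_subset)
  fix p q assume "p \<in> S" "q \<in> S"
  with assms have "p \<in> grid_V n" "q \<in> grid_V n" by auto
  then show "l1_dist p q \<le> 2 * 2 ^ n"
    unfolding grid_V_def l1_dist_def by (cases p, cases q) (auto simp: abs_le_iff)
qed simp

lemma vboundary_meets_grid_path:
  fixes a b :: int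
  assumes "a \<le> b"
    and "\<And>x. a \<le> x \<Longrightarrow> x < b \<Longrightarrow> grid_edge n (\<gamma> x) (\<gamma> (x + 1))"
    and "(\<gamma> a \<in> A) \<noteq> (\<gamma> b \<in> A)"
  shows "\<exists>x. a \<le> x \<and> x < b \<and> \<gamma> x \<in> vboundary n A"
proof -
  obtain x where x: "a \<le> x" "x < b" "(\<gamma> x \<in> A) \<noteq> (\<gamma> (x + 1) \<in> A)"
    using int_change_point[of a b "\<lambda>x. \<gamma> x \<in> A"] assms(1,3) by blast
  have "grid_edge n (\<gamma> x) (\<gamma> (x + 1))"
    using assms(2) x(1,2) .
  then have "\<gamma> x \<in> vboundary n A"
    using x(3) unfolding vboundary_def grid_edge_def by blast
  with x(1,2) show ?thesis by blast
qed

lemma vboundary_meets_row: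
  assumes "(x1, y) \<in> grid_V n" and "(x2, y) \<in> grid_V n"
    and "((x1, y) \<in> A) \<noteq> ((x2, y) \<in> A)"
  shows "\<exists>x. (x, y) \<in> vboundary n A"
proof -
  have "\<exists>x. (x, y) \<in> vboundary n A"
    if "a \<le> b" "(a, y) \<in> grid_V n" "(b, y) \<in> grid_V n" "((a, y) \<in> A) \<noteq> ((b, y) \<in> A)" for a b
    using vboundary_meets_grid_path[of a b n "\<lambda>x. (x, y)" A] that
    by (auto simp: grid_edge_def grid_V_def l1_dist_def)
  from this[of x1 x2] this[of x2 x1] assms show ?thesis
    by (cases "x1 \<le> x2") auto
qed

lemma vboundary_meets_column:
  assumes "(x, y1) \<in> grid_V n" and "(x, y2) \<in> grid_V n"
    and "((x, y1) \<in> A) \<noteq> ((x, y2) \<in> A)"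
  shows "\<exists>y. (x, y) \<in> vboundary n A"
proof -
  have "\<exists>y. (x, y) \<in> vboundary n A"
    if "a \<le> b" "(x, a) \<in> grid_V n" "(x, b) \<in> grid_V n" "((x, a) \<in> A) \<noteq> ((x, b) \<in> A)" for a b
    using vboundary_meets_grid_path[of a b n "\<lambda>y. (x, y)" A] that
    by (auto simp: grid_edge_def grid_V_def l1_dist_def)
  from this[of y1 y2] this[of y2 y1] assms show ?thesis
    by (cases "y1 \<le> y2") auto
qed

lemma vboundary_meets_row_and_column:
  assumes p0: "(x0, y0) \<in> grid_V n"
    and free_column: "\<And>y. (x0, y) \<notin> vboundary n A"
    and free_row: "\<And>x. (x, y0) \<notin> vboundary n A"
    and a: "(x1, y1) \<in> grid_V n" "((x1, y1) \<in> A) \<noteq> ((x0, y0) \<in> A)"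
  shows "(\<exists>x. (x, y1) \<in> vboundary n A) \<and> (\<exists>y. (x1, y) \<in> vboundary n A)"
proof
  have "(x0, y1) \<in> grid_V n" "(x1, y0) \<in> grid_V n"
    using p0 a(1) unfolding grid_V_def by auto
  moreover from free_column have "((x0, y1) \<in> A) = ((x0, y0) \<in> A)"
    using vboundary_meets_column[of x0 y1 n y0 A] p0 \<open>(x0, y1) \<in> grid_V n\<close> by blast
  moreover from free_row have "((x1, y0) \<in> A) = ((x0, y0) \<in> A)"
    using vboundary_meets_row[of x1 y0 n x0 A] p0 \<open>(x1, y0) \<in> grid_V n\<close> by blast
  ultimately show "\<exists>x. (x, y1) \<in> vboundary n A" "\<exists>y. (x1, y) \<in> vboundary n A"
    using vboundary_meets_row[of x0 y1 n x1 A] vboundary_meets_column[of x1 y0 n y1 A] a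
    by auto
qed

lemma l1_diam_class_opposite_corner_le:
  assumes "(x0, y0) \<in> grid_V n"
    and "\<And>y. (x0, y) \<notin> vboundary n A" and "\<And>x. (x, y0) \<notin> vboundary n A"
  shows "l1_diam {a \<in> grid_V n. (a \<in> A) \<noteq> ((x0, y0) \<in> A)} \<le> 2 * l1_diam (vboundary n A)"
proof (rule l1_diam_le_twice_if_rows_columns_meet)
  show "finite {a \<in> grid_V n. (a \<in> A) \<noteq> ((x0, y0) \<in> A)}"
    using finite_grid_V by (rule finite_subset[rotated]) blast
  show "finite (vboundary n A)"
    by (rule finite_vboundary)
next
  fix x y assume "(x, y) \<in> {a \<in> grid_V n. (a \<in> A) \<noteq> ((x0, y0) \<in> A)}"
  then have "(x, y) \<in> grid_V n" "((x, y) \<in> A) \<noteq> ((x0, y0) \<in> A)"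
    by simp_all
  from vboundary_meets_row_and_column[OF assms this]
  show "(\<exists>x'. (x', y) \<in> vboundary n A) \<and> (\<exists>y'. (x, y') \<in> vboundary n A)" .
qed

lemma small_vboundary_avoids_corner_lines:
  assumes "l1_diam (vboundary n A) < 2 ^ n"
  obtains x0 y0 where "(x0, y0) \<in> grid_V n"
    and "\<And>y. (x0, y) \<notin> vboundary n A" and "\<And>x. (x, y0) \<notin> vboundary n A"
proof -
  from assms have "(\<forall>y. (0, y) \<notin> vboundary n A) \<or> (\<forall>y. (2 ^ n, y) \<notin> vboundary n A)"
    by (intro l1_diam_lt_misses_column finite_vboundary) simp
  then obtain x0 :: int where x0: "x0 \<in> {0, 2 ^ n}" "\<And>y. (x0, y) \<notin> vboundary n A"
    by blast
  from assms have "(\<forall>x. (x, 0) \<notin> vboundary n A) \<or> (\<forall>x. (x, 2 ^ n) \<notin> vboundary n A)"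
    by (intro l1_diam_lt_misses_row finite_vboundary) simp
  then obtain y0 :: int where y0: "y0 \<in> {0, 2 ^ n}" "\<And>x. (x, y0) \<notin> vboundary n A"
    by blast
  have "(x0, y0) \<in> grid_V n"
    using x0(1) y0(1) unfolding grid_V_def by auto
  then show thesis
    using x0(2) y0(2) by (rule that)
qed

theorem lemma3p6:
  fixes n :: nat and A :: "(int \<times> int) set"
  assumes "A \<subseteq> grid_V n" and "A \<noteq> {}" and "grid_V n - A \<noteq> {}"
  shows "min (l1_diam A) (l1_diam (grid_V n - A)) \<le> 2 * l1_diam (vboundary n A)"
proof (cases "2 ^ n \<le> l1_diam (vboundary n A)")
  case True
  then show ?thesis
    using l1_diam_grid_V_subset_le[OF assms(1)] by linarith
next
  case False
  then have "l1_diam (vboundary n A) < 2 ^ n"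
    by simp
  then obtain x0 y0 where "(x0, y0) \<in> grid_V n"
    and "\<And>y. (x0, y) \<notin> vboundary n A" and "\<And>x. (x, y0) \<notin> vboundary n A"
    by (rule small_vboundary_avoids_corner_lines) blast
  then have opposite:
    "l1_diam {a \<in> grid_V n. (a \<in> A) \<noteq> ((x0, y0) \<in> A)} \<le> 2 * l1_diam (vboundary n A)"
    by (rule l1_diam_class_opposite_corner_le)
  show ?thesis
  proof (cases "(x0, y0) \<in> A")
    case True
    then have "{a \<in> grid_V n. (a \<in> A) \<noteq> ((x0, y0) \<in> A)} = grid_V n - A"
      by blast
    with opposite show ?thesis
      by (simp add: min.coboundedI2)
  next
    case False
    then have "{a \<in> grid_V n. (a \<in> A) \<noteq> ((x0, y0) \<in> A)} = A"
      using assms(1) by blast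
    with opposite show ?thesis
      by (simp add: min.coboundedI1)
  qed
qed

end
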